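(* Let $d\ge 1$, $\nu>0$, $\sigma>0$. Let $\mathbf{X}$ be a centered Gaussian random vector in $\mathbb{R}^d$ with covariance matrix $\sigma^2 I_d$, and let $\mathbf{T}$ be a random vector in $\mathbb{R}^d$, independent of $\mathbf{X}$, with the Student density $f_\nu(\mathbf{t})=A_{\nu,d}(1+\Vert\mathbf{t}\Vert^2)^{-\nu-\frac d2}$, where $A_{\nu,d}=\frac{\Gamma(\nu+\frac d2)}{\Gamma(\nu)\pi^{d/2}}$. Set $\gamma=\frac{1}{\sigma\sqrt2}$. Then the density of $\mathbf{Z}=\mathbf{X}+\mathbf{T}$ is \[ f_{\mathbf{Z}}(\mathbf{z})=\sum_{k=0}^{\infty}\alpha_k^{(\nu,\gamma)}g_{k,\sigma}(\mathbf{z}),\qquad \mathbf{z}\in\mathbb{R}^d, \] where \[ \alpha_k^{(\nu,\gamma)}=\frac{\Gamma(k+\frac d2)}{k!\,\Gamma(\frac d2)\Gamma(\nu)}\gamma^{2k}\int_0^{\infty}e^{-a}a^{\nu+\frac d2-1}(a+\gamma^2)^{-k-\frac d2}\,da,\qquad k\ge 0, \] are positive coefficients with $\sum_{k\ge0}\alpha_k^{(\nu,\gamma)}=1$.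
   Context: For $k\in\mathbb{N}$ and $\sigma>0$, $g_{k,\sigma}$ is the probability density on $\mathbb{R}^d$ \[ g_{k,\sigma}(\mathbf{z})=\frac{\Gamma(\frac d2)}{\Gamma(k+\frac d2)(\sigma\sqrt{2\pi})^d}\left(\frac{\Vert\mathbf{z}\Vert^2}{2\sigma^2}\right)^k\exp\left(-\frac{\Vert\mathbf{z}\Vert^2}{2\sigma^2}\right). \] The Student density $f_\nu$ corresponds to $2\nu$ degrees of freedom. *)

theory Defs
  imports "HOL-Probability.Probability"
begin

text \<open>Throughout, the ambient space is a Euclidean space of type 'a with d = DIM('a).\<close>

definition gauss_dens :: "real \<Rightarrow> 'a::euclidean_space \<Rightarrow> real" where
  "gauss_dens \<sigma> x = exp (- (norm x)\<^sup>2 / (2 * \<sigma>\<^sup>2)) / (\<sigma> * sqrt (2 * pi)) ^ DIM('a)"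

definition student_dens :: "real \<Rightarrow> 'a::euclidean_space \<Rightarrow> real" where
  "student_dens \<nu> t =
     Gamma (\<nu> + real DIM('a) / 2) / (Gamma \<nu> * pi powr (real DIM('a) / 2))
     * (1 + (norm t)\<^sup>2) powr (- \<nu> - real DIM('a) / 2)"

definition g_dens :: "nat \<Rightarrow> real \<Rightarrow> 'a::euclidean_space \<Rightarrow> real" where
  "g_dens k \<sigma> z =
     Gamma (real DIM('a) / 2) / (Gamma (real k + real DIM('a) / 2) * (\<sigma> * sqrt (2 * pi)) ^ DIM('a))
     * ((norm z)\<^sup>2 / (2 * \<sigma>\<^sup>2)) ^ k * exp (- (norm z)\<^sup>2 / (2 * \<sigma>\<^sup>2))"

definition alpha_coef :: "nat \<Rightarrow> real \<Rightarrow> real \<Rightarrow> nat \<Rightarrow> real" where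
  "alpha_coef d \<nu> \<gamma> k =
     Gamma (real k + real d / 2) / (fact k * Gamma (real d / 2) * Gamma \<nu>) * \<gamma> ^ (2 * k)
     * (LBINT a:{0<..}. exp (- a) * a powr (\<nu> + real d / 2 - 1)
                         * (a + \<gamma>\<^sup>2) powr (- real k - real d / 2))"

end

theory Submission
  imports Defs
begin

text \<open>
  The Student density is a Gamma mixture of centred Gaussians: with the Gamma(\<nu>) density
  \<open>w\<close>, \<open>f\<^sub>\<nu>(t) = \<integral>\<^sub>0\<^sup>\<infinity> w(a) N(0, 1/(2a))(t) da\<close>.
  Convolving with \<open>N(0, \<sigma>\<^sup>2)\<close> turns each component into \<open>N(0, \<sigma>\<^sup>2 + 1/(2a))\<close>,
  and a centred Gaussian of variance \<open>\<sigma>\<^sup>2 + \<tau>\<^sup>2\<close> is the negative binomial mixture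
  \<open>\<Sum>\<^sub>k NB(d/2, \<tau>\<^sup>2/(\<sigma>\<^sup>2 + \<tau>\<^sup>2))(k) g\<^sub>k\<^sub>,\<^sub>\<sigma>\<close> (expand \<open>exp\<close> of the variance defect
  in its power series). Integrating the negative binomial weights against \<open>w\<close> yields
  exactly \<open>\<alpha>\<^sub>k\<close>, so positivity and \<open>\<Sum>\<^sub>k \<alpha>\<^sub>k = 1\<close> are inherited from the two mixtures.
\<close>

section \<open>Lebesgue integrals on Euclidean space\<close>

lemma nn_integral_lborel_translate:
  fixes f :: "'a::euclidean_space \<Rightarrow> ennreal"
  assumes [measurable]: "f \<in> borel_measurable borel"
  shows "(\<integral>\<^sup>+x. f x \<partial>lborel) = (\<integral>\<^sup>+x. f (t + x) \<partial>lborel)"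
proof -
  have "(\<integral>\<^sup>+x. f x \<partial>lborel) = (\<integral>\<^sup>+x. f x \<partial>distr lborel borel ((+) t))"
    by (simp add: lborel_distr_plus)
  also have "\<dots> = (\<integral>\<^sup>+x. f (t + x) \<partial>lborel)"
    by (subst nn_integral_distr) auto
  finally show ?thesis .
qed

lemma convolution_density_euclidean:
  fixes f g :: "'a::euclidean_space \<Rightarrow> ennreal"
  assumes [measurable]: "f \<in> borel_measurable borel" "g \<in> borel_measurable borel"
  assumes "finite_measure (density lborel f)" "finite_measure (density lborel g)"
  shows "distr (density lborel f \<Otimes>\<^sub>M density lborel g) borel (\<lambda>(x, y). x + y)
       = density lborel (\<lambda>x. \<integral>\<^sup>+y. f (x - y) * g y \<partial>lborel)"
    (is "?l = ?r")
proof (intro measure_eqI)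
  interpret F: finite_measure "density lborel f" by fact
  interpret G: finite_measure "density lborel g" by fact
  interpret FG: pair_sigma_finite "density lborel f" "density lborel g" ..
  fix A assume "A \<in> sets ?l"
  then have [measurable]: "A \<in> sets borel"
    by simp
  have "emeasure ?l A = (\<integral>\<^sup>+p. indicator A (fst p + snd p) \<partial>(density lborel f \<Otimes>\<^sub>M density lborel g))"
    by (subst nn_integral_indicator[symmetric], simp, subst nn_integral_distr)
       (auto simp: case_prod_beta)
  also have "\<dots> = (\<integral>\<^sup>+x. \<integral>\<^sup>+y. indicator A (x + y) \<partial>density lborel g \<partial>density lborel f)"
    by (subst G.nn_integral_fst[symmetric]) auto
  also have "\<dots> = (\<integral>\<^sup>+x. \<integral>\<^sup>+y. g y * (f x * indicator A (x + y)) \<partial>lborel \<partial>lborel)"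
    by (simp add: nn_integral_density nn_integral_cmult[symmetric] ac_simps)
  also have "\<dots> = (\<integral>\<^sup>+y. \<integral>\<^sup>+x. g y * (f x * indicator A (x + y)) \<partial>lborel \<partial>lborel)"
    by (rule lborel_pair.Fubini') simp
  also have "\<dots> = (\<integral>\<^sup>+y. \<integral>\<^sup>+x. f (x - y) * g y * indicator A x \<partial>lborel \<partial>lborel)"
  proof (rule nn_integral_cong)
    fix y :: 'a
    show "(\<integral>\<^sup>+x. g y * (f x * indicator A (x + y)) \<partial>lborel)
        = (\<integral>\<^sup>+x. f (x - y) * g y * indicator A x \<partial>lborel)"
      by (subst nn_integral_lborel_translate[where t="- y"]) (auto simp: algebra_simps)
  qed
  also have "\<dots> = (\<integral>\<^sup>+x. \<integral>\<^sup>+y. f (x - y) * g y * indicator A x \<partial>lborel \<partial>lborel)"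
    by (rule lborel_pair.Fubini') simp
  also have "\<dots> = emeasure ?r A"
    by (simp add: emeasure_density nn_integral_multc)
  finally show "emeasure ?l A = emeasure ?r A" .
qed simp

lemma (in prob_space) distributed_add_euclidean:
  fixes X Y :: "'a \<Rightarrow> 'b::euclidean_space"
  assumes indep: "indep_var borel X borel Y"
    and X: "distributed M lborel X f" and Y: "distributed M lborel Y g"
  shows "distributed M lborel (\<lambda>x. X x + Y x) (\<lambda>x. \<integral>\<^sup>+y. f (x - y) * g y \<partial>lborel)"
  unfolding distributed_def
proof safe
  have [measurable]: "f \<in> borel_measurable borel" "g \<in> borel_measurable borel"
    using distributed_borel_measurable[OF X] distributed_borel_measurable[OF Y] by simp_all
  have [measurable]: "random_variable borel X" "random_variable borel Y"
    using distributed_measurable[OF X] distributed_measurable[OF Y] by auto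
  show "(\<lambda>x. \<integral>\<^sup>+y. f (x - y) * g y \<partial>lborel) \<in> borel_measurable lborel"
    by measurable
  show "random_variable lborel (\<lambda>x. X x + Y x)"
    by simp
  have "distr M borel (\<lambda>x. X x + Y x)
      = distr (distr M borel X \<Otimes>\<^sub>M distr M borel Y) borel (\<lambda>(x, y). x + y)"
    using indep unfolding indep_var_distribution_eq
    by (auto simp: distr_distr intro!: arg_cong[where f = "distr M borel"])
  also have "\<dots> = distr (density lborel f \<Otimes>\<^sub>M density lborel g) borel (\<lambda>(x, y). x + y)"
    using distributed_distr_eq_density[OF X] distributed_distr_eq_density[OF Y]
    by (simp cong: distr_cong)
  also have "\<dots> = density lborel (\<lambda>x. \<integral>\<^sup>+y. f (x - y) * g y \<partial>lborel)"
    using distributed_finite_measure_density[OF X] distributed_finite_measure_density[OF Y]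
    by (intro convolution_density_euclidean) simp_all
  finally show "distr M lborel (\<lambda>x. X x + Y x) = density lborel (\<lambda>x. \<integral>\<^sup>+y. f (x - y) * g y \<partial>lborel)"
    by (simp cong: distr_cong)
qed

lemma (in prob_space) distributed_nn_integral_density:
  "distributed M N X f \<Longrightarrow> (\<integral>\<^sup>+x. f x \<partial>N) = 1"
  using distributed_nn_integral[of M N X f "\<lambda>_. 1"] by (simp add: emeasure_space_1)

lemma nn_integral_pos_if_pos_on_Ioi:
  fixes f :: "real \<Rightarrow> real"
  assumes [measurable]: "f \<in> borel_measurable borel" and pos: "\<And>a. a > 0 \<Longrightarrow> f a > 0"
  shows "(\<integral>\<^sup>+a. ennreal (f a) \<partial>lborel) > 0"
proof -
  have "emeasure lborel {1..2::real} \<le> emeasure lborel {a \<in> space lborel. ennreal (f a) \<noteq> 0}"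
    using pos by (intro emeasure_mono) (auto simp: ennreal_eq_0_iff not_le[symmetric])
  then have "emeasure lborel {a \<in> space lborel. ennreal (f a) \<noteq> 0} \<noteq> 0"
    by auto
  then show ?thesis
    using nn_integral_0_iff[of "\<lambda>a. ennreal (f a)" lborel] by (simp add: zero_less_iff_neq_zero)
qed

section \<open>Gaussian integrals\<close>

lemma nn_integral_exp_neg_square:
  fixes c :: real
  assumes c: "c > 0"
  shows "(\<integral>\<^sup>+x. ennreal (exp (- c * x\<^sup>2)) \<partial>lborel) = ennreal (sqrt (pi / c))"
proof -
  define \<sigma> where "\<sigma> = sqrt (1 / (2 * c))"
  have \<sigma>: "\<sigma> > 0" using c by (simp add: \<sigma>_def)
  have dens: "exp (- c * x\<^sup>2) = sqrt (pi / c) * normal_density 0 \<sigma> x" for x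
    using c by (simp add: normal_density_def \<sigma>_def real_sqrt_divide field_simps)
  have "(\<integral>\<^sup>+x. ennreal (normal_density 0 \<sigma> x) \<partial>lborel) = 1"
    using integral_normal_density[OF \<sigma>] integrable_normal_density[OF \<sigma>]
    by (subst nn_integral_eq_integral) auto
  then show ?thesis
    using c unfolding dens by (simp add: ennreal_mult' nn_integral_cmult)
qed

lemma nn_integral_exp_neg_norm_square:
  fixes c :: real
  assumes c: "c > 0"
  shows "(\<integral>\<^sup>+x. ennreal (exp (- c * (norm (x::'a::euclidean_space))\<^sup>2)) \<partial>lborel)
       = ennreal ((pi / c) powr (real DIM('a) / 2))"
proof -
  have factor: "ennreal (exp (- c * (norm x)\<^sup>2)) = (\<Prod>b\<in>Basis. ennreal (exp (- c * (x \<bullet> b)\<^sup>2)))" for x :: 'a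
  proof -
    have "(norm x)\<^sup>2 = (\<Sum>b\<in>Basis. (x \<bullet> b)\<^sup>2)"
      by (subst power2_norm_eq_inner, subst euclidean_inner) (simp add: power2_eq_square)
    then show ?thesis
      by (simp add: sum_distrib_left exp_sum prod_ennreal)
  qed
  have "(\<integral>\<^sup>+x. ennreal (exp (- c * (norm (x::'a))\<^sup>2)) \<partial>lborel)
      = (\<Prod>b\<in>(Basis::'a set). \<integral>\<^sup>+t. ennreal (exp (- c * t\<^sup>2)) \<partial>lborel)"
    unfolding factor by (rule nn_integral_lborel_prod) auto
  also have "\<dots> = ennreal (sqrt (pi / c) ^ DIM('a))"
    unfolding nn_integral_exp_neg_square[OF c] using c by (simp add: ennreal_power)
  also have "sqrt (pi / c) ^ DIM('a) = (pi / c) powr (real DIM('a) / 2)"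
    using c by (simp add: powr_half_sqrt[symmetric] powr_realpow[symmetric] powr_powr)
  finally show ?thesis .
qed

lemma norm_diff_square_complete:
  fixes z t :: "'a::real_inner" and a b :: real
  assumes "a + b > 0"
  shows "b * (norm (z - t))\<^sup>2 + a * (norm t)\<^sup>2
       = (a + b) * (norm (t - (b / (a + b)) *\<^sub>R z))\<^sup>2 + a * b / (a + b) * (norm z)\<^sup>2"
proof -
  have "a + b \<noteq> 0" using assms by simp
  then show ?thesis
    unfolding power2_norm_eq_inner
    by (simp add: inner_diff_left inner_diff_right inner_commute divide_simps) algebra
qed

lemma nn_integral_gaussian_product:
  fixes a b :: real and z :: "'a::euclidean_space"
  assumes ab: "a + b > 0"
  shows "(\<integral>\<^sup>+t. ennreal (exp (- b * (norm (z - t))\<^sup>2) * exp (- a * (norm t)\<^sup>2)) \<partial>lborel)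
       = ennreal ((pi / (a + b)) powr (real DIM('a) / 2) * exp (- (a * b / (a + b)) * (norm z)\<^sup>2))"
proof -
  define m where "m = (b / (a + b)) *\<^sub>R z"
  define E where "E = exp (- (a * b / (a + b)) * (norm z)\<^sup>2)"
  have "exp (- b * (norm (z - t))\<^sup>2) * exp (- a * (norm t)\<^sup>2) = E * exp (- (a + b) * (norm (t - m))\<^sup>2)"
    for t :: 'a
    using norm_diff_square_complete[OF ab, of z t]
    by (simp add: E_def m_def flip: exp_add) (simp add: algebra_simps)
  then have "(\<integral>\<^sup>+t. ennreal (exp (- b * (norm (z - t))\<^sup>2) * exp (- a * (norm t)\<^sup>2)) \<partial>lborel)
      = ennreal E * (\<integral>\<^sup>+t. ennreal (exp (- (a + b) * (norm (t - m))\<^sup>2)) \<partial>lborel)"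
    by (simp add: E_def ennreal_mult' nn_integral_cmult)
  also have "(\<integral>\<^sup>+t. ennreal (exp (- (a + b) * (norm (t - m))\<^sup>2)) \<partial>lborel)
      = (\<integral>\<^sup>+t. ennreal (exp (- (a + b) * (norm (t::'a))\<^sup>2)) \<partial>lborel)"
    by (subst nn_integral_lborel_translate[where t=m]) auto
  finally show ?thesis
    unfolding nn_integral_exp_neg_norm_square[OF ab] E_def by (simp add: ennreal_mult' mult.commute)
qed

lemma gauss_norm_const_eq:
  assumes "\<sigma> > 0"
  shows "(\<sigma> * sqrt (2 * pi)) ^ n = (2 * pi * \<sigma>\<^sup>2) powr (real n / 2)"
proof -
  have "\<sigma> * sqrt (2 * pi) = (2 * pi * \<sigma>\<^sup>2) powr (1 / 2)"
    using assms by (simp add: powr_half_sqrt real_sqrt_mult)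
  then have "(\<sigma> * sqrt (2 * pi)) ^ n = ((2 * pi * \<sigma>\<^sup>2) powr (1 / 2)) powr real n"
    using assms by (simp add: powr_realpow)
  also have "\<dots> = (2 * pi * \<sigma>\<^sup>2) powr (real n / 2)"
    by (simp add: powr_powr)
  finally show ?thesis .
qed

lemma gauss_dens_altdef:
  assumes "\<sigma> > 0"
  shows "gauss_dens \<sigma> (x::'a::euclidean_space)
       = exp (- (1 / (2 * \<sigma>\<^sup>2)) * (norm x)\<^sup>2) / (2 * pi * \<sigma>\<^sup>2) powr (real DIM('a) / 2)"
  using assms by (simp add: gauss_dens_def gauss_norm_const_eq)

lemma gauss_dens_nonneg: "\<sigma> > 0 \<Longrightarrow> gauss_dens \<sigma> x \<ge> 0"
  by (simp add: gauss_dens_def)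

lemma borel_measurable_gauss_dens[measurable (raw)]:
  assumes [measurable]: "f \<in> borel_measurable M" "g \<in> borel_measurable M"
  shows "(\<lambda>x. gauss_dens (f x) (g x :: 'a::euclidean_space)) \<in> borel_measurable M"
  unfolding gauss_dens_def by measurable

lemma gauss_dens_convolution:
  fixes z :: "'a::euclidean_space"
  assumes \<sigma>: "\<sigma> > 0" and \<tau>: "\<tau> > 0"
  shows "(\<integral>\<^sup>+t. ennreal (gauss_dens \<sigma> (z - t) * gauss_dens \<tau> t) \<partial>lborel)
       = ennreal (gauss_dens (sqrt (\<sigma>\<^sup>2 + \<tau>\<^sup>2)) z)"
proof -
  define p where "p = real DIM('a) / 2"
  define b where "b = 1 / (2 * \<sigma>\<^sup>2)"
  define a where "a = 1 / (2 * \<tau>\<^sup>2)"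
  define C where "C = 1 / ((2 * pi * \<sigma>\<^sup>2) powr p * (2 * pi * \<tau>\<^sup>2) powr p)"
  have ab: "a + b > 0" using \<sigma> \<tau> by (simp add: a_def b_def add_pos_pos)
  have C: "C \<ge> 0" by (simp add: C_def)
  have "gauss_dens \<sigma> (z - t) * gauss_dens \<tau> t = C * (exp (- b * (norm (z - t))\<^sup>2) * exp (- a * (norm t)\<^sup>2))"
    for t :: 'a
    using \<sigma> \<tau> by (simp add: gauss_dens_altdef a_def b_def C_def p_def)
  then have "(\<integral>\<^sup>+t. ennreal (gauss_dens \<sigma> (z - t) * gauss_dens \<tau> t) \<partial>lborel)
      = ennreal C * (\<integral>\<^sup>+t. ennreal (exp (- b * (norm (z - t))\<^sup>2) * exp (- a * (norm t)\<^sup>2)) \<partial>lborel)"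
    using C by (simp add: ennreal_mult'[of C] nn_integral_cmult)
  also have "\<dots> = ennreal (C * ((pi / (a + b)) powr p * exp (- (a * b / (a + b)) * (norm z)\<^sup>2)))"
    unfolding nn_integral_gaussian_product[OF ab] p_def using C by (simp flip: ennreal_mult')
  also have "C * ((pi / (a + b)) powr p * exp (- (a * b / (a + b)) * (norm z)\<^sup>2))
      = gauss_dens (sqrt (\<sigma>\<^sup>2 + \<tau>\<^sup>2)) z"
  proof -
    define X Y W where "X = 2 * pi * \<sigma>\<^sup>2" and "Y = 2 * pi * \<tau>\<^sup>2" and "W = pi / (a + b)"
    have XYW: "X > 0" "Y > 0" "W > 0"
      using \<sigma> \<tau> ab by (simp_all add: X_def Y_def W_def)
    have "X * Y / W = 2 * pi * (\<sigma>\<^sup>2 + \<tau>\<^sup>2)"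
      using \<sigma> \<tau> by (simp add: X_def Y_def W_def a_def b_def field_simps)
    moreover have "C * W powr p = 1 / (X * Y / W) powr p"
      using XYW by (simp add: C_def X_def[symmetric] Y_def[symmetric] powr_divide powr_mult)
    ultimately have C_eq: "C * (pi / (a + b)) powr p = 1 / (2 * pi * (sqrt (\<sigma>\<^sup>2 + \<tau>\<^sup>2))\<^sup>2) powr p"
      by (simp add: W_def)
    have exponent_eq: "a * b / (a + b) = 1 / (2 * (sqrt (\<sigma>\<^sup>2 + \<tau>\<^sup>2))\<^sup>2)"
      using \<sigma> \<tau> by (simp add: a_def b_def field_simps)
    have "sqrt (\<sigma>\<^sup>2 + \<tau>\<^sup>2) > 0"
      using \<sigma> by (simp add: add_pos_nonneg)
    then have "gauss_dens (sqrt (\<sigma>\<^sup>2 + \<tau>\<^sup>2)) z = exp (- (1 / (2 * (sqrt (\<sigma>\<^sup>2 + \<tau>\<^sup>2))\<^sup>2)) * (norm z)\<^sup>2)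
        / (2 * pi * (sqrt (\<sigma>\<^sup>2 + \<tau>\<^sup>2))\<^sup>2) powr p"
      unfolding p_def by (rule gauss_dens_altdef)
    then show ?thesis
      unfolding mult.assoc[symmetric] C_eq exponent_eq by simp
  qed
  finally show ?thesis .
qed

lemma nn_integral_gauss_convolution_less_top:
  fixes f :: "'a::euclidean_space \<Rightarrow> ennreal"
  assumes \<sigma>: "\<sigma> > 0" and [measurable]: "f \<in> borel_measurable borel"
    and finite: "(\<integral>\<^sup>+t. f t \<partial>lborel) < \<infinity>"
  shows "(\<integral>\<^sup>+t. ennreal (gauss_dens \<sigma> (z - t)) * f t \<partial>lborel) < \<infinity>"
proof -
  define N where "N = (\<sigma> * sqrt (2 * pi)) ^ DIM('a)"
  have "gauss_dens \<sigma> x \<le> 1 / N" for x :: 'a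
    unfolding gauss_dens_def N_def[symmetric] using \<sigma> by (intro divide_right_mono) (auto simp: N_def)
  then have "(\<integral>\<^sup>+t. ennreal (gauss_dens \<sigma> (z - t)) * f t \<partial>lborel)
      \<le> (\<integral>\<^sup>+t. ennreal (1 / N) * f t \<partial>lborel)"
    by (intro nn_integral_mono mult_right_mono ennreal_leI) auto
  also have "\<dots> < \<infinity>"
    using finite by (simp add: nn_integral_cmult ennreal_mult_less_top)
  finally show ?thesis .
qed

section \<open>The Student density as a Gaussian scale mixture\<close>

lemma nn_integral_powr_exp_neg:
  fixes s c :: real
  assumes s: "s > 0" and c: "c > 0"
  shows "(\<integral>\<^sup>+a. ennreal (indicator {0<..} a * a powr (s - 1) * exp (- c * a)) \<partial>lborel)
       = ennreal (Gamma s / c powr s)"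
proof -
  define I where "I = (\<integral>\<^sup>+a. ennreal (indicator {0<..} a * a powr (s - 1) * exp (- c * a)) \<partial>lborel)"
  have scaled: "indicator {0..} (0 + c * a) * (0 + c * a) powr (s - 1) / exp (0 + c * a)
      = c powr (s - 1) * (indicator {0<..} a * a powr (s - 1) * exp (- c * a))" for a
    using c by (cases "a > 0") (auto simp: powr_mult exp_minus indicator_def zero_le_mult_iff divide_inverse)
  have "ennreal (Gamma s)
      = ennreal c * (\<integral>\<^sup>+a. ennreal (c powr (s - 1) * (indicator {0<..} a * a powr (s - 1) * exp (- c * a))) \<partial>lborel)"
    unfolding Gamma_conv_nn_integral_real[OF s] scaled[symmetric]
    using c by (subst nn_integral_real_affine[where c=c and t=0]) auto
  also have "\<dots> = ennreal (c * c powr (s - 1)) * I"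
    unfolding I_def using c by (simp add: ennreal_mult' nn_integral_cmult mult.assoc)
  also have "c * c powr (s - 1) = c powr s"
    using c by (simp add: powr_diff)
  finally have Gamma_eq: "ennreal (Gamma s) = ennreal (c powr s) * I" .
  have "I = (ennreal (1 / c powr s) * ennreal (c powr s)) * I"
    using c by (simp flip: ennreal_mult')
  also have "\<dots> = ennreal (Gamma s / c powr s)"
    unfolding mult.assoc Gamma_eq[symmetric] using c by (simp flip: ennreal_mult')
  finally show ?thesis
    unfolding I_def .
qed

definition gamma_dens :: "real \<Rightarrow> real \<Rightarrow> real" where
  "gamma_dens \<nu> a = indicator {0<..} a * a powr (\<nu> - 1) * exp (- a) / Gamma \<nu>"

lemma gamma_dens_nonneg: "\<nu> > 0 \<Longrightarrow> gamma_dens \<nu> a \<ge> 0"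
  by (simp add: gamma_dens_def Gamma_real_pos)

lemma borel_measurable_gamma_dens[measurable]: "gamma_dens \<nu> \<in> borel_measurable borel"
  unfolding gamma_dens_def by measurable

lemma nn_integral_gamma_dens:
  assumes "\<nu> > 0"
  shows "(\<integral>\<^sup>+a. ennreal (gamma_dens \<nu> a) \<partial>lborel) = 1"
  using nn_integral_powr_exp_neg[OF assms, of 1] Gamma_real_pos[OF assms]
  by (simp add: gamma_dens_def divide_ennreal[symmetric] nn_integral_divide)

lemma gamma_dens_mult_gauss_dens:
  fixes t :: "'a::euclidean_space"
  assumes a: "a > 0"
  shows "gamma_dens \<nu> a * gauss_dens (1 / sqrt (2 * a)) t
       = a powr (\<nu> + real DIM('a) / 2 - 1) * exp (- (1 + (norm t)\<^sup>2) * a)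
         / (Gamma \<nu> * pi powr (real DIM('a) / 2))"
proof -
  define p where "p = real DIM('a) / 2"
  have "gauss_dens (1 / sqrt (2 * a)) t = exp (- a * (norm t)\<^sup>2) / (pi / a) powr p"
    using a by (simp add: gauss_dens_altdef p_def power_divide)
  then have "gamma_dens \<nu> a * gauss_dens (1 / sqrt (2 * a)) t
      = a powr (\<nu> - 1) / (pi / a) powr p * (exp (- a) * exp (- a * (norm t)\<^sup>2)) / Gamma \<nu>"
    using a unfolding gamma_dens_def by (simp add: ac_simps)
  also have "a powr (\<nu> - 1) / (pi / a) powr p = a powr (\<nu> + p - 1) / pi powr p"
    using a by (simp add: powr_divide powr_add diff_add_eq[symmetric])
  also have "exp (- a) * exp (- a * (norm t)\<^sup>2) = exp (- (1 + (norm t)\<^sup>2) * a)"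
    by (simp add: algebra_simps flip: exp_add)
  finally show ?thesis
    by (simp add: p_def)
qed

lemma student_dens_gauss_mixture:
  fixes t :: "'a::euclidean_space"
  assumes \<nu>: "\<nu> > 0"
  shows "ennreal (student_dens \<nu> t)
       = (\<integral>\<^sup>+a. ennreal (gamma_dens \<nu> a * gauss_dens (1 / sqrt (2 * a)) t) \<partial>lborel)"
proof -
  define p where "p = real DIM('a) / 2"
  define c where "c = 1 + (norm t)\<^sup>2"
  define K where "K = 1 / (Gamma \<nu> * pi powr p)"
  have c: "c > 0" by (simp add: c_def add_pos_nonneg)
  have K: "K > 0" using \<nu> by (simp add: K_def Gamma_real_pos)
  have s: "\<nu> + p > 0" using \<nu> by (simp add: p_def add_pos_nonneg)
  have mixture: "gamma_dens \<nu> a * gauss_dens (1 / sqrt (2 * a)) t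
      = K * (indicator {0<..} a * a powr (\<nu> + p - 1) * exp (- c * a))" for a
  proof (cases "a > 0")
    case True
    then show ?thesis
      by (simp add: gamma_dens_mult_gauss_dens K_def c_def p_def)
  qed (simp add: gamma_dens_def)
  have "(\<integral>\<^sup>+a. ennreal (gamma_dens \<nu> a * gauss_dens (1 / sqrt (2 * a)) t) \<partial>lborel)
      = ennreal K * (\<integral>\<^sup>+a. ennreal (indicator {0<..} a * a powr (\<nu> + p - 1) * exp (- c * a)) \<partial>lborel)"
    using K unfolding mixture by (simp add: ennreal_mult'[of K] nn_integral_cmult)
  also have "\<dots> = ennreal (K * (Gamma (\<nu> + p) / c powr (\<nu> + p)))"
    using K unfolding nn_integral_powr_exp_neg[OF s c] by (simp flip: ennreal_mult')
  also have "K * (Gamma (\<nu> + p) / c powr (\<nu> + p)) = student_dens \<nu> t"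
  proof -
    have "c powr (- \<nu> - p) = 1 / c powr (\<nu> + p)"
      using powr_minus_divide[of c "\<nu> + p"] by simp
    then show ?thesis
      by (simp add: student_dens_def K_def c_def[symmetric] p_def[symmetric])
  qed
  finally show ?thesis ..
qed

section \<open>Negative binomial mixtures of the densities g_k\<close>

definition neg_binomial_weight :: "real \<Rightarrow> real \<Rightarrow> nat \<Rightarrow> real" where
  "neg_binomial_weight p q k = Gamma (real k + p) / (fact k * Gamma p) * (1 - q) powr p * q ^ k"

lemma neg_binomial_weight_nonneg:
  "p > 0 \<Longrightarrow> 0 \<le> q \<Longrightarrow> neg_binomial_weight p q k \<ge> 0"
  by (simp add: neg_binomial_weight_def Gamma_real_pos add_nonneg_pos)

lemma neg_binomial_weight_sums:
  assumes p: "p > 0" and q: "0 \<le> q" "q < 1"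
  shows "(\<lambda>k. neg_binomial_weight p q k) sums 1"
proof -
  have coeff: "(- p gchoose k) * (- q) ^ k = Gamma (real k + p) / (fact k * Gamma p) * q ^ k" for k
  proof -
    have "p \<notin> \<int>\<^sub>\<le>\<^sub>0" using p by (auto elim!: nonpos_Ints_cases)
    then have "pochhammer p k = Gamma (real k + p) / Gamma p"
      by (simp add: pochhammer_Gamma add.commute)
    moreover have "(- 1) ^ k * (- q) ^ k = q ^ k"
      by (simp flip: power_mult_distrib)
    ultimately show ?thesis
      by (simp add: gbinomial_pochhammer field_simps)
  qed
  have "(\<lambda>k. (- p gchoose k) * (- q) ^ k) sums (1 + - q) powr (- p)"
    using q by (intro gen_binomial_real) simp
  then have "(\<lambda>k. (1 - q) powr p * ((- p gchoose k) * (- q) ^ k)) sums ((1 - q) powr p * (1 - q) powr (- p))"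
    by (intro sums_mult) simp
  then show ?thesis
    using q by (simp add: coeff neg_binomial_weight_def powr_minus mult_ac)
qed

lemma neg_binomial_weight_le_1:
  assumes "p > 0" "0 \<le> q" "q < 1"
  shows "neg_binomial_weight p q k \<le> 1"
  using sum_le_suminf[of "neg_binomial_weight p q" "{k}"] neg_binomial_weight_sums[OF assms]
    neg_binomial_weight_nonneg[OF assms(1,2)]
  by (simp add: sums_iff)

lemma g_dens_nonneg: "\<sigma> > 0 \<Longrightarrow> g_dens k \<sigma> (z::'a::euclidean_space) \<ge> 0"
  by (simp add: g_dens_def Gamma_real_pos add_nonneg_pos)

lemma g_dens_eq_gauss_dens:
  "g_dens k \<sigma> (z::'a::euclidean_space)
     = Gamma (real DIM('a) / 2) / Gamma (real k + real DIM('a) / 2)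
       * ((norm z)\<^sup>2 / (2 * \<sigma>\<^sup>2)) ^ k * gauss_dens \<sigma> z"
  by (simp add: g_dens_def gauss_dens_def)

lemma gauss_dens_sqrt_add:
  fixes z :: "'a::euclidean_space"
  assumes \<sigma>: "\<sigma> > 0"
  shows "gauss_dens (sqrt (\<sigma>\<^sup>2 + \<tau>\<^sup>2)) z
       = (\<sigma>\<^sup>2 / (\<sigma>\<^sup>2 + \<tau>\<^sup>2)) powr (real DIM('a) / 2)
         * exp (\<tau>\<^sup>2 / (\<sigma>\<^sup>2 + \<tau>\<^sup>2) * ((norm z)\<^sup>2 / (2 * \<sigma>\<^sup>2))) * gauss_dens \<sigma> z"
proof -
  define p where "p = real DIM('a) / 2"
  define S where "S = \<sigma>\<^sup>2 + \<tau>\<^sup>2"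
  have S: "S > 0"
    using \<sigma> by (simp add: S_def add_pos_nonneg)
  have "(\<sigma>\<^sup>2 / S) powr p * exp (\<tau>\<^sup>2 / S * ((norm z)\<^sup>2 / (2 * \<sigma>\<^sup>2))) * gauss_dens \<sigma> z
      = (\<sigma>\<^sup>2 / S) powr p / (2 * pi * \<sigma>\<^sup>2) powr p
        * exp (\<tau>\<^sup>2 / S * ((norm z)\<^sup>2 / (2 * \<sigma>\<^sup>2)) + - (1 / (2 * \<sigma>\<^sup>2)) * (norm z)\<^sup>2)"
    unfolding gauss_dens_altdef[OF \<sigma>] p_def[symmetric] exp_add by simp
  also have "(\<sigma>\<^sup>2 / S) powr p / (2 * pi * \<sigma>\<^sup>2) powr p = 1 / (2 * pi * S) powr p"
    using \<sigma> S by (simp add: powr_divide powr_mult)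
  also have "\<tau>\<^sup>2 / S * ((norm z)\<^sup>2 / (2 * \<sigma>\<^sup>2)) + - (1 / (2 * \<sigma>\<^sup>2)) * (norm z)\<^sup>2
      = - (1 / (2 * S)) * (norm z)\<^sup>2"
  proof -
    have "\<tau>\<^sup>2 = S - \<sigma>\<^sup>2" by (simp add: S_def)
    then show ?thesis
      using \<sigma> S by (simp only:) (simp add: field_simps)
  qed
  also have "1 / (2 * pi * S) powr p * exp (- (1 / (2 * S)) * (norm z)\<^sup>2) = gauss_dens (sqrt S) z"
    using S by (simp add: gauss_dens_altdef p_def)
  finally show ?thesis
    by (simp add: S_def p_def)
qed

lemma gauss_dens_neg_binomial_mixture:
  fixes z :: "'a::euclidean_space"
  assumes \<sigma>: "\<sigma> > 0"
  shows "(\<lambda>k. neg_binomial_weight (real DIM('a) / 2) (\<tau>\<^sup>2 / (\<sigma>\<^sup>2 + \<tau>\<^sup>2)) k * g_dens k \<sigma> z)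
           sums gauss_dens (sqrt (\<sigma>\<^sup>2 + \<tau>\<^sup>2)) z"
proof -
  define p where "p = real DIM('a) / 2"
  define q where "q = \<tau>\<^sup>2 / (\<sigma>\<^sup>2 + \<tau>\<^sup>2)"
  define y where "y = (norm z)\<^sup>2 / (2 * \<sigma>\<^sup>2)"
  define C where "C = (1 - q) powr p * gauss_dens \<sigma> z"
  have p: "p > 0"
    by (simp add: p_def)
  have "\<sigma>\<^sup>2 + \<tau>\<^sup>2 \<noteq> 0"
    using \<sigma> by (simp add: add_pos_nonneg less_imp_neq[symmetric])
  then have one_minus_q: "1 - q = \<sigma>\<^sup>2 / (\<sigma>\<^sup>2 + \<tau>\<^sup>2)"
    by (simp add: q_def field_simps)
  have weighted_term: "neg_binomial_weight p q k * g_dens k \<sigma> z = C * ((q * y) ^ k / fact k)" for k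
  proof -
    have "Gamma (real k + p) \<noteq> 0" "Gamma p \<noteq> 0"
      using p by (simp_all add: Gamma_real_pos add_nonneg_pos less_imp_neq[symmetric])
    then show ?thesis
      unfolding neg_binomial_weight_def g_dens_eq_gauss_dens C_def p_def[symmetric] y_def[symmetric]
      by (simp add: power_mult_distrib field_simps)
  qed
  have "(\<lambda>k. C * ((q * y) ^ k / fact k)) sums (C * exp (q * y))"
    using exp_converges[of "q * y"] by (intro sums_mult) (simp add: divide_inverse mult.commute)
  also have "C * exp (q * y) = gauss_dens (sqrt (\<sigma>\<^sup>2 + \<tau>\<^sup>2)) z"
    unfolding gauss_dens_sqrt_add[OF \<sigma>] C_def one_minus_q
    by (simp add: p_def q_def y_def mult_ac)
  finally have "(\<lambda>k. neg_binomial_weight p q k * g_dens k \<sigma> z) sums gauss_dens (sqrt (\<sigma>\<^sup>2 + \<tau>\<^sup>2)) z"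
    by (simp only: weighted_term)
  then show ?thesis
    by (simp only: p_def q_def)
qed

lemma gamma_dens_mult_neg_binomial_weight:
  assumes a: "a > 0" and b: "b > 0"
  shows "gamma_dens \<nu> a * neg_binomial_weight p (b / (a + b)) k
       = Gamma (real k + p) / (fact k * Gamma p * Gamma \<nu>) * b ^ k
         * (exp (- a) * a powr (\<nu> + p - 1) * (a + b) powr (- real k - p))"
proof -
  have q: "1 - b / (a + b) = a / (a + b)"
    using a b by (simp add: field_simps)
  have "gamma_dens \<nu> a * neg_binomial_weight p (b / (a + b)) k
      = Gamma (real k + p) / (fact k * Gamma p * Gamma \<nu>) * exp (- a)
        * (a powr (\<nu> - 1) * (a / (a + b)) powr p * (b / (a + b)) ^ k)"
    using a unfolding gamma_dens_def neg_binomial_weight_def q by (simp add: ac_simps)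
  also have "a powr (\<nu> - 1) * (a / (a + b)) powr p * (b / (a + b)) ^ k
      = b ^ k * ((a powr (\<nu> - 1) * a powr p) * ((a + b) powr (- real k) * (a + b) powr (- p)))"
    using a b by (simp add: powr_divide power_divide powr_minus_divide powr_realpow mult_ac)
  also have "\<dots> = b ^ k * (a powr (\<nu> - 1 + p) * (a + b) powr (- real k + - p))"
    by (simp only: powr_add)
  also have "\<nu> - 1 + p = \<nu> + p - 1" by simp
  also have "- real k + - p = - real k - p" by simp
  finally show ?thesis
    by (simp add: ac_simps)
qed

lemma alpha_coef_gamma_mixture:
  assumes \<nu>: "\<nu> > 0" and \<gamma>: "\<gamma> > 0" and d: "d > 0"
  shows "(\<integral>\<^sup>+a. ennreal (gamma_dens \<nu> a * neg_binomial_weight (real d / 2) (\<gamma>\<^sup>2 / (a + \<gamma>\<^sup>2)) k) \<partial>lborel)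
       = ennreal (alpha_coef d \<nu> \<gamma> k)"
proof -
  define p where "p = real d / 2"
  define b where "b = \<gamma>\<^sup>2"
  define C where "C = Gamma (real k + p) / (fact k * Gamma p * Gamma \<nu>) * b ^ k"
  define f where "f a = exp (- a) * a powr (\<nu> + p - 1) * (a + b) powr (- real k - p)" for a
  have p: "p > 0" and b: "b > 0" using d \<gamma> by (simp_all add: p_def b_def)
  have C: "C > 0" using \<nu> p b by (simp add: C_def Gamma_real_pos add_nonneg_pos)
  have integrand: "gamma_dens \<nu> a * neg_binomial_weight p (b / (a + b)) k
      = C * (indicator {0<..} a * f a)" for a
  proof (cases "a > 0")
    case True
    then show ?thesis
      using b by (simp add: gamma_dens_mult_neg_binomial_weight C_def f_def)
  qed (simp add: gamma_dens_def)
  have f_nonneg: "0 \<le> indicator {0<..} a * f a" for a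
    by (simp add: f_def)
  have [measurable]: "f \<in> borel_measurable borel"
    unfolding f_def by measurable
  have mixture_eq: "(\<integral>\<^sup>+a. ennreal (gamma_dens \<nu> a * neg_binomial_weight p (b / (a + b)) k) \<partial>lborel)
      = ennreal C * (\<integral>\<^sup>+a. ennreal (indicator {0<..} a * f a) \<partial>lborel)"
    using C unfolding integrand by (simp add: ennreal_mult'[of C] nn_integral_cmult)
  have "(\<integral>\<^sup>+a. ennreal (gamma_dens \<nu> a * neg_binomial_weight p (b / (a + b)) k) \<partial>lborel)
      \<le> (\<integral>\<^sup>+a. ennreal (gamma_dens \<nu> a) \<partial>lborel)"
  proof (intro nn_integral_mono ennreal_leI)
    fix a :: real
    show "gamma_dens \<nu> a * neg_binomial_weight p (b / (a + b)) k \<le> gamma_dens \<nu> a"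
    proof (cases "a > 0")
      case True
      then show ?thesis
        using b \<nu> p by (intro mult_left_le neg_binomial_weight_le_1 gamma_dens_nonneg) auto
    qed (simp add: gamma_dens_def)
  qed
  then have "ennreal C * (\<integral>\<^sup>+a. ennreal (indicator {0<..} a * f a) \<partial>lborel) < \<infinity>"
    unfolding mixture_eq nn_integral_gamma_dens[OF \<nu>] by (rule le_less_trans) simp
  then have "(\<integral>\<^sup>+a. ennreal (indicator {0<..} a * f a) \<partial>lborel) < \<infinity>"
    using C by (auto simp: ennreal_mult_less_top)
  then have "integrable lborel (\<lambda>a. indicator {0<..} a * f a)"
    using f_nonneg by (intro integrableI_nonneg) auto
  then have "(\<integral>\<^sup>+a. ennreal (indicator {0<..} a * f a) \<partial>lborel) = ennreal (LBINT a:{0<..}. f a)"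
    using f_nonneg by (simp add: nn_integral_eq_integral set_lebesgue_integral_def)
  moreover have "alpha_coef d \<nu> \<gamma> k = C * (LBINT a:{0<..}. f a)"
    by (simp add: alpha_coef_def C_def f_def p_def b_def power_mult)
  ultimately show ?thesis
    using C unfolding p_def[symmetric] b_def[symmetric] mixture_eq by (simp add: ennreal_mult')
qed

lemma alpha_coef_pos:
  assumes \<nu>: "\<nu> > 0" and \<gamma>: "\<gamma> > 0" and d: "d > 0"
  shows "alpha_coef d \<nu> \<gamma> k > 0"
proof -
  have "(\<integral>\<^sup>+a. ennreal (gamma_dens \<nu> a * neg_binomial_weight (real d / 2) (\<gamma>\<^sup>2 / (a + \<gamma>\<^sup>2)) k) \<partial>lborel) > 0"
  proof (rule nn_integral_pos_if_pos_on_Ioi)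
    show "(\<lambda>a. gamma_dens \<nu> a * neg_binomial_weight (real d / 2) (\<gamma>\<^sup>2 / (a + \<gamma>\<^sup>2)) k)
        \<in> borel_measurable borel"
      unfolding neg_binomial_weight_def by measurable
    fix a :: real
    assume "a > 0"
    then show "gamma_dens \<nu> a * neg_binomial_weight (real d / 2) (\<gamma>\<^sup>2 / (a + \<gamma>\<^sup>2)) k > 0"
      using \<nu> \<gamma> d
      by (simp add: gamma_dens_def neg_binomial_weight_def Gamma_real_pos add_nonneg_pos
          field_simps)
  qed
  then show ?thesis
    using alpha_coef_gamma_mixture[OF assms] by simp
qed

lemma alpha_coef_sums_1:
  assumes \<nu>: "\<nu> > 0" and \<gamma>: "\<gamma> > 0" and d: "d > 0"
  shows "(\<lambda>k. alpha_coef d \<nu> \<gamma> k) sums 1"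
proof -
  define \<beta> where "\<beta> a k = gamma_dens \<nu> a * neg_binomial_weight (real d / 2) (\<gamma>\<^sup>2 / (a + \<gamma>\<^sup>2)) k"
    for a k
  have \<beta>_nonneg: "\<beta> a k \<ge> 0" for a k
  proof (cases "a > 0")
    case True
    then show ?thesis
      using \<nu> d unfolding \<beta>_def
      by (intro mult_nonneg_nonneg gamma_dens_nonneg neg_binomial_weight_nonneg) auto
  qed (simp add: \<beta>_def gamma_dens_def)
  have pointwise: "(\<Sum>k. ennreal (\<beta> a k)) = ennreal (gamma_dens \<nu> a)" for a
  proof (cases "a > 0")
    case True
    have "(\<lambda>k. neg_binomial_weight (real d / 2) (\<gamma>\<^sup>2 / (a + \<gamma>\<^sup>2)) k) sums 1"
      using True \<gamma> d by (intro neg_binomial_weight_sums) (auto simp: divide_less_eq add_pos_pos)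
    then have "(\<lambda>k. \<beta> a k) sums gamma_dens \<nu> a"
      unfolding \<beta>_def using sums_mult by fastforce
    then show ?thesis
      using \<beta>_nonneg by (rule suminf_ennreal_eq[rotated])
  qed (simp add: \<beta>_def gamma_dens_def)
  have "(\<Sum>k. ennreal (alpha_coef d \<nu> \<gamma> k)) = (\<Sum>k. \<integral>\<^sup>+a. ennreal (\<beta> a k) \<partial>lborel)"
    by (simp add: \<beta>_def alpha_coef_gamma_mixture[OF assms])
  also have "\<dots> = (\<integral>\<^sup>+a. (\<Sum>k. ennreal (\<beta> a k)) \<partial>lborel)"
    by (rule nn_integral_suminf[symmetric]) (simp add: \<beta>_def neg_binomial_weight_def)
  also have "\<dots> = 1"
    by (simp add: pointwise nn_integral_gamma_dens[OF \<nu>])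
  finally have "(\<lambda>k. ennreal (alpha_coef d \<nu> \<gamma> k)) sums 1"
    using summable_sums[OF summableI, of "\<lambda>k. ennreal (alpha_coef d \<nu> \<gamma> k)"] by simp
  then show ?thesis
    using sums_ennreal[of "alpha_coef d \<nu> \<gamma>" 1] alpha_coef_pos[OF assms]
    by (simp add: less_imp_le)
qed

lemma nn_integral_gauss_student_convolution:
  fixes z :: "'a::euclidean_space"
  assumes \<nu>: "\<nu> > 0" and \<sigma>: "\<sigma> > 0"
  shows "(\<integral>\<^sup>+t. ennreal (gauss_dens \<sigma> (z - t)) * ennreal (student_dens \<nu> t) \<partial>lborel)
       = (\<integral>\<^sup>+a. ennreal (gamma_dens \<nu> a * gauss_dens (sqrt (\<sigma>\<^sup>2 + 1 / (2 * a))) z) \<partial>lborel)"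
proof -
  have "(\<integral>\<^sup>+t. ennreal (gauss_dens \<sigma> (z - t)) * ennreal (student_dens \<nu> t) \<partial>lborel)
      = (\<integral>\<^sup>+t. \<integral>\<^sup>+a. ennreal (gauss_dens \<sigma> (z - t))
            * ennreal (gamma_dens \<nu> a * gauss_dens (1 / sqrt (2 * a)) t) \<partial>lborel \<partial>lborel)"
    unfolding student_dens_gauss_mixture[OF \<nu>] by (simp add: nn_integral_cmult)
  also have "\<dots> = (\<integral>\<^sup>+a. \<integral>\<^sup>+t. ennreal (gauss_dens \<sigma> (z - t))
            * ennreal (gamma_dens \<nu> a * gauss_dens (1 / sqrt (2 * a)) t) \<partial>lborel \<partial>lborel)"
    by (rule lborel_pair.Fubini') simp
  also have "\<dots> = (\<integral>\<^sup>+a. ennreal (gamma_dens \<nu> a * gauss_dens (sqrt (\<sigma>\<^sup>2 + 1 / (2 * a))) z) \<partial>lborel)"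
  proof (rule nn_integral_cong)
    fix a :: real
    show "(\<integral>\<^sup>+t. ennreal (gauss_dens \<sigma> (z - t))
            * ennreal (gamma_dens \<nu> a * gauss_dens (1 / sqrt (2 * a)) t) \<partial>lborel)
        = ennreal (gamma_dens \<nu> a * gauss_dens (sqrt (\<sigma>\<^sup>2 + 1 / (2 * a))) z)"
    proof (cases "a > 0")
      case True
      then have \<tau>: "1 / sqrt (2 * a) > 0" and \<tau>_sq: "(1 / sqrt (2 * a))\<^sup>2 = 1 / (2 * a)"
        by (simp_all add: power_divide)
      have "(\<integral>\<^sup>+t. ennreal (gauss_dens \<sigma> (z - t))
            * ennreal (gamma_dens \<nu> a * gauss_dens (1 / sqrt (2 * a)) t) \<partial>lborel)
          = ennreal (gamma_dens \<nu> a)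
            * (\<integral>\<^sup>+t. ennreal (gauss_dens \<sigma> (z - t) * gauss_dens (1 / sqrt (2 * a)) t) \<partial>lborel)"
        using \<nu> \<sigma> \<tau>
        by (simp add: nn_integral_cmult[symmetric] gamma_dens_nonneg gauss_dens_nonneg
            ennreal_mult' mult_ac)
      then show ?thesis
        using \<nu> \<sigma> \<tau> gamma_dens_nonneg[OF \<nu>]
        by (simp add: gauss_dens_convolution \<tau>_sq ennreal_mult')
    qed (simp add: gamma_dens_def)
  qed
  finally show ?thesis .
qed

lemma nn_integral_gauss_student_convolution_series:
  fixes z :: "'a::euclidean_space"
  assumes \<nu>: "\<nu> > 0" and \<sigma>: "\<sigma> > 0" and \<gamma>: "\<gamma> = 1 / (\<sigma> * sqrt 2)"
  shows "(\<integral>\<^sup>+t. ennreal (gauss_dens \<sigma> (z - t)) * ennreal (student_dens \<nu> t) \<partial>lborel)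
       = (\<Sum>k. ennreal (alpha_coef DIM('a) \<nu> \<gamma> k * g_dens k \<sigma> z))"
proof -
  define p where "p = real DIM('a) / 2"
  define \<beta> where "\<beta> a k = gamma_dens \<nu> a * neg_binomial_weight p (\<gamma>\<^sup>2 / (a + \<gamma>\<^sup>2)) k" for a k
  have \<gamma>_pos: "\<gamma> > 0" using \<sigma> \<gamma> by simp
  have [measurable]: "(\<lambda>a. \<beta> a k) \<in> borel_measurable borel" for k
    unfolding \<beta>_def neg_binomial_weight_def by measurable
  have expansion: "ennreal (gamma_dens \<nu> a * gauss_dens (sqrt (\<sigma>\<^sup>2 + 1 / (2 * a))) z)
      = (\<Sum>k. ennreal (\<beta> a k * g_dens k \<sigma> z))" for a
  proof (cases "a > 0")
    case True
    define \<tau> where "\<tau> = 1 / sqrt (2 * a)"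
    have \<tau>_sq: "\<tau>\<^sup>2 = 1 / (2 * a)"
      using True by (simp add: \<tau>_def power_divide)
    have "\<tau>\<^sup>2 / (\<sigma>\<^sup>2 + \<tau>\<^sup>2) = \<gamma>\<^sup>2 / (a + \<gamma>\<^sup>2)"
      using True \<sigma> by (simp add: \<tau>_sq \<gamma> power_divide field_simps)
    then have "(\<lambda>k. \<beta> a k * g_dens k \<sigma> z)
        sums (gamma_dens \<nu> a * gauss_dens (sqrt (\<sigma>\<^sup>2 + 1 / (2 * a))) z)"
      using sums_mult[OF gauss_dens_neg_binomial_mixture[OF \<sigma>, of \<tau> z], of "gamma_dens \<nu> a"]
      by (simp add: \<beta>_def \<tau>_sq p_def mult_ac)
    moreover have "\<beta> a k \<ge> 0" for k
      using True \<nu> \<gamma>_pos unfolding \<beta>_def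
      by (intro mult_nonneg_nonneg gamma_dens_nonneg neg_binomial_weight_nonneg) (auto simp: p_def)
    ultimately show ?thesis
      using \<sigma> by (intro suminf_ennreal_eq[symmetric] mult_nonneg_nonneg g_dens_nonneg) auto
  qed (simp add: \<beta>_def gamma_dens_def)
  have "(\<integral>\<^sup>+t. ennreal (gauss_dens \<sigma> (z - t)) * ennreal (student_dens \<nu> t) \<partial>lborel)
      = (\<integral>\<^sup>+a. (\<Sum>k. ennreal (\<beta> a k * g_dens k \<sigma> z)) \<partial>lborel)"
    unfolding nn_integral_gauss_student_convolution[OF \<nu> \<sigma>] expansion ..
  also have "\<dots> = (\<Sum>k. \<integral>\<^sup>+a. ennreal (\<beta> a k * g_dens k \<sigma> z) \<partial>lborel)"
    by (rule nn_integral_suminf) simp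
  also have "\<dots> = (\<Sum>k. ennreal (alpha_coef DIM('a) \<nu> \<gamma> k * g_dens k \<sigma> z))"
  proof (rule suminf_cong)
    fix k
    have "(\<integral>\<^sup>+a. ennreal (\<beta> a k * g_dens k \<sigma> z) \<partial>lborel)
        = (\<integral>\<^sup>+a. ennreal (\<beta> a k) \<partial>lborel) * ennreal (g_dens k \<sigma> z)"
      using g_dens_nonneg[OF \<sigma>, of k z]
      by (simp add: ennreal_mult'' nn_integral_multc)
    then show "(\<integral>\<^sup>+a. ennreal (\<beta> a k * g_dens k \<sigma> z) \<partial>lborel)
        = ennreal (alpha_coef DIM('a) \<nu> \<gamma> k * g_dens k \<sigma> z)"
      using alpha_coef_gamma_mixture[OF \<nu> \<gamma>_pos, of "DIM('a)" k] g_dens_nonneg[OF \<sigma>, of k z]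
      by (simp add: \<beta>_def p_def ennreal_mult'')
  qed
  finally show ?thesis .
qed

theorem theorem1:
  fixes M :: "'b measure" and X T :: "'b \<Rightarrow> 'a::euclidean_space"
    and \<nu> \<sigma> \<gamma> :: real
  assumes "prob_space M"
    and "\<nu> > 0" and "\<sigma> > 0"
    and "distributed M lborel X (\<lambda>x. ennreal (gauss_dens \<sigma> x))"
    and "distributed M lborel T (\<lambda>t. ennreal (student_dens \<nu> t))"
    and "prob_space.indep_var M borel X borel T"
    and "\<gamma> = 1 / (\<sigma> * sqrt 2)"
  shows "distributed M lborel (\<lambda>\<omega>. X \<omega> + T \<omega>)
           (\<lambda>z. ennreal (\<Sum>k. alpha_coef DIM('a) \<nu> \<gamma> k * g_dens k \<sigma> z))
         \<and> (\<forall>k. alpha_coef DIM('a) \<nu> \<gamma> k > 0)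
         \<and> ((\<lambda>k. alpha_coef DIM('a) \<nu> \<gamma> k) sums 1)"
proof -
  interpret prob_space M by fact
  have \<nu>: "\<nu> > 0" and \<sigma>: "\<sigma> > 0" and \<gamma>: "\<gamma> > 0" and d: "DIM('a) > 0"
    using assms(2,3,7) by simp_all
  have alpha_pos: "alpha_coef DIM('a) \<nu> \<gamma> k > 0" for k
    using alpha_coef_pos[OF \<nu> \<gamma> d] .
  have density: "(\<integral>\<^sup>+t. ennreal (gauss_dens \<sigma> (z - t)) * ennreal (student_dens \<nu> t) \<partial>lborel)
      = ennreal (\<Sum>k. alpha_coef DIM('a) \<nu> \<gamma> k * g_dens k \<sigma> z)" for z :: 'a
  proof -
    have "(\<integral>\<^sup>+t. ennreal (gauss_dens \<sigma> (z - t)) * ennreal (student_dens \<nu> t) \<partial>lborel) < \<infinity>"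
      using distributed_borel_measurable[OF assms(5)] distributed_nn_integral_density[OF assms(5)]
      by (intro nn_integral_gauss_convolution_less_top[OF \<sigma>]) auto
    then show ?thesis
      using alpha_pos g_dens_nonneg[OF \<sigma>]
      unfolding nn_integral_gauss_student_convolution_series[OF \<nu> \<sigma> assms(7)]
      by (intro suminf_ennreal mult_nonneg_nonneg) (auto intro: less_imp_le)
  qed
  show ?thesis
    using distributed_add_euclidean[OF assms(6,4,5)] alpha_pos alpha_coef_sums_1[OF \<nu> \<gamma> d]
    unfolding density by blast
qed

end
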